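(* Let $\kappa_1,\kappa_2,\kappa_3>0$ and let $Y_t$ be the continuous-time Markov chain on $\mathbb N_0$ with transitions $x\to x+1$ at rate $\kappa_1x+\kappa_2x(x-1)$ and $x\to x-2$ at rate $\kappa_3x(x-1)(x-2)$ (the mass-action network $S\to2S$, $2S\to3S$, $3S\to S$). Then every stationary distribution $\pi$ of $Y_t$ with unbounded support satisfies $\pi\in\mathcal P^{1+}_1\cap\mathcal P^{1-}_1$.
   Context: A stationary distribution is a probability measure $\pi$ on $\mathbb N_0$ satisfying the master equation $0=\sum_{\omega}\lambda_\omega(x-\omega)\pi(x-\omega)-\sum_\omega\lambda_\omega(x)\pi(x)$ for all $x$, where $\lambda_\omega(x)$ is the rate of $x\to x+\omega$ (zero at negative arguments). $T_\pi(x)=\sum_{y\ge x}\pi(y)$. For non-negative $f,g$, $f\lesssim g$ (equivalently $g\gtrsim f$) means there are $C,N>0$ with $f(x)\le Cg(x)$ for all $x\ge N$; $\exp(-h(x)(1+o(1)))$ means $\exp(-h(x)(1+\epsilon(x)))$ for some $\epsilon(x)\to0$. $\mathcal P^{1+}_a$ ($a>0$) is the set of probability distributions $\pi$ with $T_\pi(x)\lesssim\exp(-ax\log x(1+o(1)))$, and $\mathcal P^{1-}_a$ those with $T_\pi(x)\gtrsim\exp(-ax\log x(1+o(1)))$. *)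

theory Defs
  imports Complex_Main
begin

definition prob_dist :: "(nat \<Rightarrow> real) \<Rightarrow> bool" where
  "prob_dist p \<longleftrightarrow> (\<forall>x. p x \<ge> 0) \<and> p sums 1"

definition ext_int :: "(nat \<Rightarrow> real) \<Rightarrow> int \<Rightarrow> real" where
  "ext_int p x = (if x < 0 then 0 else p (nat x))"

text \<open>Stationary distribution: a probability distribution satisfying the master equation
  for every integer x; Omega is the finite set of jump vectors and lam w x the rate of
  x -> x + w (assumed zero at negative arguments by the rate function itself).\<close>
definition stationary :: "int set \<Rightarrow> (int \<Rightarrow> int \<Rightarrow> real) \<Rightarrow> (nat \<Rightarrow> real) \<Rightarrow> bool" where
  "stationary Omega lam p \<longleftrightarrow> prob_dist p \<and>
     (\<forall>x::int. 0 = (\<Sum>w\<in>Omega. lam w (x - w) * ext_int p (x - w))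
                   - (\<Sum>w\<in>Omega. lam w x) * ext_int p x)"

definition tail :: "(nat \<Rightarrow> real) \<Rightarrow> nat \<Rightarrow> real" where
  "tail p x = (\<Sum>k. p (x + k))"

definition lesssim :: "(nat \<Rightarrow> real) \<Rightarrow> (nat \<Rightarrow> real) \<Rightarrow> bool" where
  "lesssim f g \<longleftrightarrow> (\<exists>C N. C > 0 \<and> N > 0 \<and> (\<forall>x\<ge>N. f x \<le> C * g x))"

definition P1plus :: "real \<Rightarrow> (nat \<Rightarrow> real) set" where
  "P1plus a = {p. prob_dist p \<and> (\<exists>eps::nat \<Rightarrow> real. eps \<longlonglongrightarrow> 0 \<and>
      lesssim (tail p) (\<lambda>x. exp (- (a * real x * ln (real x) * (1 + eps x)))))}"

definition P1minus :: "real \<Rightarrow> (nat \<Rightarrow> real) set" where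
  "P1minus a = {p. prob_dist p \<and> (\<exists>eps::nat \<Rightarrow> real. eps \<longlonglongrightarrow> 0 \<and>
      lesssim (\<lambda>x. exp (- (a * real x * ln (real x) * (1 + eps x)))) (tail p))}"

definition rates_ex :: "real \<Rightarrow> real \<Rightarrow> real \<Rightarrow> int \<Rightarrow> int \<Rightarrow> real" where
  "rates_ex k1 k2 k3 w x =
     (if x < 0 then 0
      else if w = 1 then k1 * of_int x + k2 * of_int x * (of_int x - 1)
      else if w = -2 then k3 * of_int x * (of_int x - 1) * (of_int x - 2)
      else 0)"

end

theory Submission
  imports Defs "HOL-Real_Asymp.Real_Asymp"
begin

text \<open>Summing the master equation over \<open>{0..n}\<close> gives the flux balance
  \<open>A(n) \<pi>(n) = B(n+1) \<pi>(n+1) + B(n+2) \<pi>(n+2)\<close> across the cut between \<open>n\<close> and \<open>n+1\<close>,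
  where \<open>A\<close> is the quadratic birth rate and \<open>B\<close> the cubic death rate. Dropping the last term
  gives \<open>n \<pi>(n+1) \<le> D \<pi>(n)\<close>, hence \<open>\<pi>(n) \<le> K (E/n)^n\<close>, and the tail is dominated by a geometric
  series with this first term. Conversely, as \<open>B(n+1) \<le> B(n+2)\<close>, one of \<open>\<pi>(n+1), \<pi>(n+2)\<close> is at
  least \<open>c \<pi>(n) / n\<close>, so the running maximum \<open>max (\<pi> n) (\<pi> (n+1))\<close> decays no faster than
  \<open>(c/n)^n\<close> once it is positive, which unbounded support guarantees. Both \<open>(E/n)^n\<close> and
  \<open>(c/n)^n\<close> are of the form \<open>exp (-n log n (1 + o(1)))\<close>.\<close>

definition birth_rate :: "real \<Rightarrow> real \<Rightarrow> nat \<Rightarrow> real" where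
  "birth_rate k1 k2 n = k1 * real n + k2 * real n * (real n - 1)"

definition death_rate :: "real \<Rightarrow> nat \<Rightarrow> real" where
  "death_rate k3 n = k3 * real n * (real n - 1) * (real n - 2)"

lemma Suc_power_Suc_le:
  assumes "n \<ge> 1"
  shows "(real n + 1) ^ (n + 1) \<le> 6 * real n ^ (n + 1)"
proof -
  have n: "real n \<ge> 1" using assms by simp
  have "(1 + 1 / real n) ^ n \<le> exp 1"
    using exp_ge_one_plus_x_over_n_power_n[of n 1] assms by simp
  also have "\<dots> \<le> 3" by (rule exp_le)
  finally have e: "(1 + 1 / real n) ^ n \<le> 3" .
  have "(real n + 1) ^ n = real n ^ n * (1 + 1 / real n) ^ n"
    using n by (simp add: power_mult_distrib[symmetric] field_simps)
  also have "\<dots> \<le> real n ^ n * 3" using e by (intro mult_left_mono) auto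
  finally have "(real n + 1) ^ n \<le> 3 * real n ^ n" by simp
  then have "(real n + 1) * (real n + 1) ^ n \<le> (2 * real n) * (3 * real n ^ n)"
    using n by (intro mult_mono) auto
  then show ?thesis by simp
qed

lemma summable_shifted_prob:
  assumes "prob_dist p"
  shows "summable (\<lambda>k. p (n + k))"
  using assms summable_ignore_initial_segment[of p n]
  by (auto simp: prob_dist_def sums_summable add.commute)

lemma tail_ge:
  assumes "prob_dist p" "n \<le> y"
  shows "p y \<le> tail p n"
proof -
  have "(\<Sum>k\<in>{y - n}. p (n + k)) \<le> (\<Sum>k. p (n + k))"
    using assms(1) summable_shifted_prob by (intro sum_le_suminf) (auto simp: prob_dist_def)
  then show ?thesis using assms(2) by (simp add: tail_def)
qed

lemma exp_nlogn_eq_power: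
  assumes "q > 0" "ln q = - ln (real n) * (1 + e)"
  shows "exp (- (real n * ln (real n) * (1 + e))) = q ^ n"
proof -
  have "- (real n * ln (real n) * (1 + e)) = real n * ln q" using assms(2) by simp
  then show ?thesis using assms(1) by (simp add: exp_of_nat_mult)
qed

lemma P1plus_oneI:
  assumes "prob_dist p" "E > 0" "C \<ge> 0"
    and bound: "\<forall>n\<ge>N. tail p n \<le> C * (E / real n) ^ n"
  shows "p \<in> P1plus 1"
  unfolding P1plus_def
proof (intro CollectI conjI exI[of _ "\<lambda>n. - ln E / ln (real n)"])
  show "(\<lambda>n. - ln E / ln (real n)) \<longlonglongrightarrow> 0" by real_asymp
  show "lesssim (tail p) (\<lambda>n. exp (- (1 * real n * ln (real n) * (1 + - ln E / ln (real n)))))"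
    unfolding lesssim_def
  proof (intro exI[of _ "C + 1"] exI[of _ "max 2 N"] conjI allI impI)
    fix n assume n: "max 2 N \<le> n"
    have "ln (real n) > 0" using n by simp
    then have "ln (E / real n) = - ln (real n) * (1 + - ln E / ln (real n))"
      using n \<open>E > 0\<close> by (simp add: ln_div field_simps)
    then have "exp (- (real n * ln (real n) * (1 + - ln E / ln (real n)))) = (E / real n) ^ n"
      using n \<open>E > 0\<close> by (intro exp_nlogn_eq_power) auto
    moreover have "C * (E / real n) ^ n \<le> (C + 1) * (E / real n) ^ n"
      using \<open>E > 0\<close> by (intro mult_right_mono) auto
    ultimately show "tail p n \<le> (C + 1) * exp (- (1 * real n * ln (real n) * (1 + - ln E / ln (real n))))"
      using bound n by fastforce
  qed (use assms in auto)
qed (rule assms)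

lemma P1minus_oneI:
  assumes "prob_dist p" "c > 0" "C > 0"
    and bound: "\<forall>n\<ge>N. (c / (real n + 2)) ^ n \<le> C * tail p n"
  shows "p \<in> P1minus 1"
  unfolding P1minus_def
proof (intro CollectI conjI exI[of _ "\<lambda>n. (ln (real n + 2) - ln c) / ln (real n) - 1"])
  show "(\<lambda>n. (ln (real n + 2) - ln c) / ln (real n) - 1) \<longlonglongrightarrow> 0" by real_asymp
  show "lesssim (\<lambda>n. exp (- (1 * real n * ln (real n) * (1 + ((ln (real n + 2) - ln c) / ln (real n) - 1)))))
    (tail p)"
    unfolding lesssim_def
  proof (intro exI[of _ C] exI[of _ "max 2 N"] conjI allI impI)
    fix n assume n: "max 2 N \<le> n"
    have "ln (real n) > 0" using n by simp
    then have "ln (c / (real n + 2)) = - ln (real n) * (1 + ((ln (real n + 2) - ln c) / ln (real n) - 1))"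
      using \<open>c > 0\<close> by (simp add: ln_div field_simps)
    then have "exp (- (real n * ln (real n) * (1 + ((ln (real n + 2) - ln c) / ln (real n) - 1))))
        = (c / (real n + 2)) ^ n"
      using \<open>c > 0\<close> by (intro exp_nlogn_eq_power) auto
    then show "exp (- (1 * real n * ln (real n) * (1 + ((ln (real n + 2) - ln c) / ln (real n) - 1))))
        \<le> C * tail p n"
      using bound n by simp
  qed (use assms in auto)
qed (rule assms)

locale mass_action_stationary =
  fixes k1 k2 k3 :: real and p :: "nat \<Rightarrow> real"
  assumes k1_pos: "k1 > 0" and k2_pos: "k2 > 0" and k3_pos: "k3 > 0"
    and stationary: "stationary {1, -2} (rates_ex k1 k2 k3) p"
begin

lemma prob_dist: "prob_dist p"
  using stationary by (simp add: stationary_def)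

lemma nonneg: "p n \<ge> 0"
  using prob_dist by (simp add: prob_dist_def)

lemma master_equation:
  "birth_rate k1 k2 n * p n + death_rate k3 (n + 3) * p (n + 3)
     = (birth_rate k1 k2 (Suc n) + death_rate k3 (Suc n)) * p (Suc n)"
proof -
  have "0 = (\<Sum>w\<in>{1, -2}. rates_ex k1 k2 k3 w (int (Suc n) - w) * ext_int p (int (Suc n) - w))
      - (\<Sum>w\<in>{1, -2}. rates_ex k1 k2 k3 w (int (Suc n))) * ext_int p (int (Suc n))"
    using stationary unfolding stationary_def by blast
  moreover have "nat (1 + int n) = Suc n" "nat (int n + 3) = n + 3" by auto
  ultimately show ?thesis
    by (simp add: rates_ex_def ext_int_def birth_rate_def death_rate_def algebra_simps)
qed

lemma flux_balance:
  "birth_rate k1 k2 n * p n = death_rate k3 (n + 1) * p (n + 1) + death_rate k3 (n + 2) * p (n + 2)"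
proof (induction n)
  case 0
  show ?case by (simp add: birth_rate_def death_rate_def)
next
  case (Suc n)
  with master_equation[of n] show ?case
    by (simp add: algebra_simps numeral_3_eq_3)
qed

lemma ratio_upper:
  assumes "n \<ge> 2"
  shows "real n * p (n + 1) \<le> 2 * (k1 + k2) / k3 * p n"
proof -
  have n: "real n \<ge> 2" using assms by simp
  have "death_rate k3 (n + 2) * p (n + 2) \<ge> 0"
    using n k3_pos nonneg by (simp add: death_rate_def)
  then have "death_rate k3 (n + 1) * p (n + 1) \<le> birth_rate k1 k2 n * p n"
    using flux_balance[of n] by linarith
  moreover have "k3 * real n ^ 3 / 2 * p (n + 1) \<le> death_rate k3 (n + 1) * p (n + 1)"
  proof (rule mult_right_mono)
    have "real n * real n \<ge> 2 * 2" using n by (intro mult_mono) auto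
    then have "real n * (real n * real n) \<ge> real n * 4" using n by (intro mult_left_mono) auto
    moreover have "real n * (real n ^ 2 - 1) = real n * (real n * real n) - real n"
      "real n ^ 3 / 2 = real n * (real n * real n) / 2"
      by (simp_all add: power2_eq_square power3_eq_cube algebra_simps)
    ultimately have "real n ^ 3 / 2 \<le> real n * (real n ^ 2 - 1)"
      using n by linarith
    then show "k3 * real n ^ 3 / 2 \<le> death_rate k3 (n + 1)"
      using k3_pos mult_left_mono[of _ _ k3]
      by (fastforce simp: death_rate_def power2_eq_square algebra_simps)
  qed (rule nonneg)
  moreover have "birth_rate k1 k2 n * p n \<le> (k1 + k2) * real n ^ 2 * p n"
  proof (rule mult_right_mono)
    have "k1 * real n \<le> k1 * (real n * real n)" using n k1_pos by (intro mult_left_mono) auto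
    moreover have "k2 * real n \<ge> 0" using k2_pos by simp
    moreover have "birth_rate k1 k2 n = k1 * real n + k2 * (real n * real n) - k2 * real n"
      "(k1 + k2) * real n ^ 2 = k1 * (real n * real n) + k2 * (real n * real n)"
      by (simp_all add: birth_rate_def power2_eq_square algebra_simps)
    ultimately show "birth_rate k1 k2 n \<le> (k1 + k2) * real n ^ 2" by linarith
  qed (rule nonneg)
  ultimately have "real n ^ 2 * (k3 / 2 * (real n * p (n + 1))) \<le> real n ^ 2 * ((k1 + k2) * p n)"
    by (simp add: power2_eq_square power3_eq_cube algebra_simps)
  then have "k3 / 2 * (real n * p (n + 1)) \<le> (k1 + k2) * p n"
    using n by (simp add: mult_le_cancel_left)
  then show ?thesis
    using k3_pos by (simp add: field_simps)
qed

text \<open>The ratio bound \<open>2 (k1 + k2) / k3\<close> times the factor 6 of \<open>Suc_power_Suc_le\<close>.\<close>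
definition upper_base :: real where
  "upper_base = 12 * (k1 + k2) / k3"

lemma upper_base_pos: "upper_base > 0"
  using k1_pos k2_pos k3_pos by (simp add: upper_base_def)

lemma power_weighted_upper:
  assumes "n \<ge> 2"
  shows "p n * real n ^ n \<le> p 2 * (2 / upper_base) ^ 2 * upper_base ^ n"
  using assms
proof (induction n rule: dec_induct)
  case base
  show ?case using upper_base_pos by (simp add: power_divide)
next
  case (step n)
  have n: "real n \<ge> 2" using step.hyps by simp
  have "real n * (p (n + 1) * (real n + 1) ^ (n + 1))
      = (real n * p (n + 1)) * (real n + 1) ^ (n + 1)" by simp
  also have "\<dots> \<le> (2 * (k1 + k2) / k3 * p n) * (6 * real n ^ (n + 1))"
    using step.hyps(1) k1_pos k2_pos k3_pos nonneg
    by (intro mult_mono[OF ratio_upper Suc_power_Suc_le]) auto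
  also have "\<dots> = real n * (upper_base * (p n * real n ^ n))"
    by (simp add: upper_base_def algebra_simps)
  also have "\<dots> \<le> real n * (upper_base * (p 2 * (2 / upper_base) ^ 2 * upper_base ^ n))"
    using step.IH upper_base_pos n by (intro mult_left_mono) auto
  finally have "p (n + 1) * (real n + 1) ^ (n + 1)
      \<le> upper_base * (p 2 * (2 / upper_base) ^ 2 * upper_base ^ n)"
    by (rule mult_left_le_imp_le) (use n in simp)
  then show ?case by (simp add: algebra_simps)
qed

lemma tail_upper:
  assumes "n \<ge> 2" "real n \<ge> 2 * upper_base"
  shows "tail p n \<le> 2 * (p 2 * (2 / upper_base) ^ 2) * (upper_base / real n) ^ n"
proof -
  define K where "K = p 2 * (2 / upper_base) ^ 2"
  define r where "r = upper_base / real n"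
  have K: "K \<ge> 0" using nonneg by (simp add: K_def)
  have r: "0 \<le> r" "r \<le> 1 / 2"
    using assms upper_base_pos by (auto simp: r_def field_simps)
  have term_le: "p (n + k) \<le> K * r ^ n * r ^ k" for k
  proof -
    have "p (n + k) * real (n + k) ^ (n + k) \<le> K * upper_base ^ (n + k)"
      using power_weighted_upper[of "n + k"] assms by (simp add: K_def)
    then have "p (n + k) \<le> K * upper_base ^ (n + k) / real (n + k) ^ (n + k)"
      using assms by (simp add: field_simps)
    also have "\<dots> \<le> K * upper_base ^ (n + k) / real n ^ (n + k)"
      using assms K upper_base_pos by (intro divide_left_mono power_mono mult_pos_pos) auto
    also have "\<dots> = K * r ^ n * r ^ k"
      by (simp add: r_def power_add power_divide)
    finally show ?thesis .
  qed
  have "summable (\<lambda>k. p (n + k))"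
    using prob_dist by (rule summable_shifted_prob)
  moreover have "summable (\<lambda>k. K * r ^ n * r ^ k)"
    using r by (intro summable_mult summable_geometric) auto
  ultimately have "tail p n \<le> (\<Sum>k. K * r ^ n * r ^ k)"
    unfolding tail_def by (rule suminf_le[OF term_le])
  also have "\<dots> = K * r ^ n * (1 / (1 - r))"
    using r by (simp add: suminf_mult suminf_geometric)
  also have "\<dots> \<le> K * r ^ n * 2"
    using r K by (intro mult_left_mono) (auto simp: field_simps)
  finally show ?thesis by (simp add: K_def r_def)
qed

definition lower_base :: real where
  "lower_base = k2 / (4 * k3)"

lemma lower_base_pos: "lower_base > 0"
  using k2_pos k3_pos by (simp add: lower_base_def)

lemma ratio_lower:
  assumes "n \<ge> 3"
  shows "lower_base / (real n + 3) * p n \<le> max (p (n + 1)) (p (n + 2))"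
proof -
  define m where "m = real n"
  define Q where "Q = lower_base / (m + 3)"
  define M where "M = max (p (n + 1)) (p (n + 2))"
  have m: "m \<ge> 3" using assms by (simp add: m_def)
  have d1: "death_rate k3 (n + 1) = k3 * ((m + 1) * m * (m - 1))"
    and d2: "death_rate k3 (n + 2) = k3 * ((m + 2) * (m + 1) * m)"
    by (simp_all add: death_rate_def m_def algebra_simps)
  have d1_nonneg: "death_rate k3 (n + 1) \<ge> 0" using d1 m k3_pos by simp
  have d1_le_d2: "death_rate k3 (n + 1) \<le> death_rate k3 (n + 2)"
    unfolding d1 d2 using m k3_pos by (intro mult_left_mono mult_mono) auto
  have d2_pos: "death_rate k3 (n + 2) > 0" using d2 m k3_pos by simp
  have "(m + 2) * (m + 1) \<le> 2 * (m + 3) * (m - 1)"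
  proof -
    have "m * m \<ge> 3 * 3" using m by (intro mult_mono) auto
    then show ?thesis using m by (simp add: algebra_simps)
  qed
  have "2 * Q * death_rate k3 (n + 2) = k2 * m * ((m + 2) * (m + 1)) / (2 * (m + 3))"
    unfolding d2 Q_def lower_base_def using k3_pos m by (simp add: divide_simps)
  also have "\<dots> \<le> k2 * m * (2 * (m + 3) * (m - 1)) / (2 * (m + 3))"
    using \<open>(m + 2) * (m + 1) \<le> _\<close> k2_pos m by (intro divide_right_mono mult_left_mono) auto
  also have "\<dots> \<le> birth_rate k1 k2 n"
    using m k1_pos by (simp add: birth_rate_def m_def)
  finally have rate_le: "2 * Q * death_rate k3 (n + 2) \<le> birth_rate k1 k2 n" .
  have "(2 * death_rate k3 (n + 2)) * (Q * p n) = 2 * Q * death_rate k3 (n + 2) * p n"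
    by simp
  also have "\<dots> \<le> birth_rate k1 k2 n * p n"
    using rate_le nonneg by (rule mult_right_mono)
  also have "\<dots> \<le> death_rate k3 (n + 1) * M + death_rate k3 (n + 2) * M"
    unfolding flux_balance M_def using d1_nonneg d2_pos
    by (intro add_mono mult_left_mono) auto
  also have "\<dots> \<le> 2 * death_rate k3 (n + 2) * M"
    using d1_le_d2 nonneg[of "n + 1"] by (simp add: M_def mult_right_mono)
  finally have "Q * p n \<le> M"
    by (rule mult_left_le_imp_le) (use d2_pos in simp)
  then show ?thesis by (simp add: Q_def M_def m_def)
qed

lemma running_max_lower:
  assumes "x0 \<ge> 3" "lower_base \<le> real x0 + 2" "n \<ge> x0"
  shows "p x0 * (lower_base / (real n + 2)) ^ (n - x0) \<le> max (p n) (p (n + 1))"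
  using assms(3)
proof (induction n rule: dec_induct)
  case base
  show ?case by simp
next
  case (step n)
  define q where "q = lower_base / (real n + 3)"
  have q: "0 \<le> q" "q \<le> 1" "q \<le> lower_base / (real n + 2)"
    using lower_base_pos assms(2) step.hyps(1) by (auto simp: q_def frac_le)
  have "p x0 * q ^ (Suc n - x0) = q * (p x0 * q ^ (n - x0))"
    using step.hyps(1) by (simp add: Suc_diff_le)
  also have "\<dots> \<le> q * (p x0 * (lower_base / (real n + 2)) ^ (n - x0))"
    using q nonneg by (intro mult_left_mono power_mono) auto
  also have "\<dots> \<le> q * max (p n) (p (n + 1))"
    using step.IH q(1) by (rule mult_left_mono)
  also have "\<dots> = max (q * p n) (q * p (n + 1))"
    using q by (simp add: max_mult_distrib_left)
  also have "\<dots> \<le> max (p (n + 1)) (p (n + 2))"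
  proof -
    have "q * p n \<le> max (p (n + 1)) (p (n + 2))"
      using ratio_lower[of n] step.hyps(1) assms(1) by (simp add: q_def)
    moreover have "q * p (n + 1) \<le> p (n + 1)"
      using q nonneg by (simp add: mult_left_le_one_le)
    ultimately show ?thesis by simp
  qed
  finally show ?case by (simp add: q_def add.commute)
qed

lemma tail_lower:
  assumes "x0 \<ge> 3" "lower_base \<le> real x0 + 2" "n \<ge> x0"
  shows "p x0 * (lower_base / (real n + 2)) ^ n \<le> tail p n"
proof -
  have base: "0 \<le> lower_base / (real n + 2)" "lower_base / (real n + 2) \<le> 1"
    using lower_base_pos assms by auto
  have "p x0 * (lower_base / (real n + 2)) ^ n \<le> p x0 * (lower_base / (real n + 2)) ^ (n - x0)"
    using base nonneg by (intro mult_left_mono power_decreasing) auto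
  also have "\<dots> \<le> max (p n) (p (n + 1))"
    using running_max_lower[OF assms] .
  also have "\<dots> \<le> tail p n"
    using tail_ge[OF prob_dist] by simp
  finally show ?thesis .
qed

end

theorem mainTheorem12:
  fixes k1 k2 k3 :: real and p :: "nat \<Rightarrow> real"
  assumes "k1 > 0" and "k2 > 0" and "k3 > 0"
    and "stationary {1, -2} (rates_ex k1 k2 k3) p"
    and "\<forall>N. \<exists>x\<ge>N. p x > 0"
  shows "p \<in> P1plus 1 \<inter> P1minus 1"
proof -
  interpret mass_action_stationary k1 k2 k3 p
    using assms(1-4) by unfold_locales
  have "p \<in> P1plus 1"
    using prob_dist upper_base_pos nonneg[of 2] tail_upper
    by (intro P1plus_oneI[where C = "2 * (p 2 * (2 / upper_base) ^ 2)"
          and N = "max 2 (nat \<lceil>2 * upper_base\<rceil>)"]) auto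
  moreover obtain x0 where "x0 \<ge> max 3 (nat \<lceil>lower_base\<rceil>)" "p x0 > 0"
    using assms(5) by blast
  then have "p \<in> P1minus 1"
    using prob_dist lower_base_pos tail_lower[of x0]
    by (intro P1minus_oneI[where c = lower_base and C = "1 / p x0" and N = x0])
      (auto simp: field_simps)
  ultimately show ?thesis by simp
qed

end
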